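(* Let $A$ be a simple finite-dimensional associative superalgebra over an algebraically closed field $\mathbb{K}$ of characteristic zero. Then $A$ admits an even-symmetric structure if and only if $A$ is isomorphic to $M_{r,s}(\mathbb{K})$ for some integers $r\ge 1$, $s\ge 0$. In particular, the field $\mathbb{K}$ (with $\mathbb{K}_{\bar 1}=\{0\}$) is, up to isomorphism, the unique simple associative supercommutative superalgebra admitting an even-symmetric structure.
   Context: A superalgebra is a $\mathbb{Z}_2$-graded algebra $A=A_{\bar 0}\oplus A_{\bar 1}$ with $A_\alpha A_\beta\subseteq A_{\alpha+\beta}$; $|x|$ denotes the degree of a homogeneous element. An associative superalgebra is simple if its product is not identically zero and its only graded two-sided ideals are $\{0\}$ and $A$. It is supercommutative if $xy=(-1)^{|x||y|}yx$ for homogeneous $x,y$. An even-symmetric structure on $A$ is a bilinear form $B$ with $B(A_{\bar 0},A_{\bar 1})=B(A_{\bar 1},A_{\bar 0})=\{0\}$ which is supersymmetric ($B(x,y)=(-1)^{|x||y|}B(y,x)$ for homogeneous $x,y$), associative ($B(xy,z)=B(x,yz)$) and non-degenerate. For $r\ge1$, $s\ge0$, $n=r+s$, $M_{r,s}(\mathbb{K})$ is the matrix algebra $M_n(\mathbb{K})$ with even part the block-diagonal matrices $\begin{pmatrix}a&0\\0&b\end{pmatrix}$, $a\in M_r(\mathbb{K})$, $b\in M_s(\mathbb{K})$, and odd part the block-off-diagonal matrices $\begin{pmatrix}0&c\\d&0\end{pmatrix}$, $c\in M_{r\times s}(\mathbb{K})$, $d\in M_{s\times r}(\mathbb{K})$.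 *)

theory Defs
  imports Main "HOL-Computational_Algebra.Polynomial"
begin

text \<open>A field is algebraically closed if every non-constant polynomial has a root.
  Characteristic zero is expressed by the type class field_char_0.\<close>
definition alg_closed :: "'k::field itself \<Rightarrow> bool" where
  "alg_closed _ \<longleftrightarrow> (\<forall>p :: 'k poly. degree p \<ge> 1 \<longrightarrow> (\<exists>z. poly p z = 0))"

definition superalgebra ::
  "('k::field \<Rightarrow> 'a::ab_group_add \<Rightarrow> 'a) \<Rightarrow> ('a \<Rightarrow> 'a \<Rightarrow> 'a) \<Rightarrow> 'a set \<Rightarrow> 'a set \<Rightarrow> bool" where
  "superalgebra sc mul A0 A1 \<longleftrightarrow>
     vector_space sc \<and>
     (\<forall>x y z. mul (x + y) z = mul x z + mul y z) \<and>
     (\<forall>x y z. mul x (y + z) = mul x y + mul x z) \<and>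
     (\<forall>c x y. mul (sc c x) y = sc c (mul x y)) \<and>
     (\<forall>c x y. mul x (sc c y) = sc c (mul x y)) \<and>
     module.subspace sc A0 \<and> module.subspace sc A1 \<and>
     A0 \<inter> A1 = {0} \<and>
     (\<forall>x. \<exists>u\<in>A0. \<exists>v\<in>A1. x = u + v) \<and>
     (\<forall>x\<in>A0. \<forall>y\<in>A0. mul x y \<in> A0) \<and>
     (\<forall>x\<in>A0. \<forall>y\<in>A1. mul x y \<in> A1) \<and>
     (\<forall>x\<in>A1. \<forall>y\<in>A0. mul x y \<in> A1) \<and>
     (\<forall>x\<in>A1. \<forall>y\<in>A1. mul x y \<in> A0)"

definition associative_mul :: "('a \<Rightarrow> 'a \<Rightarrow> 'a) \<Rightarrow> bool" where
  "associative_mul mul \<longleftrightarrow> (\<forall>x y z. mul (mul x y) z = mul x (mul y z))"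

definition fin_dim :: "('k::field \<Rightarrow> 'a::ab_group_add \<Rightarrow> 'a) \<Rightarrow> bool" where
  "fin_dim sc \<longleftrightarrow> (\<exists>S. finite S \<and> module.span sc S = UNIV)"

definition graded_ideal ::
  "('k::field \<Rightarrow> 'a::ab_group_add \<Rightarrow> 'a) \<Rightarrow> ('a \<Rightarrow> 'a \<Rightarrow> 'a) \<Rightarrow> 'a set \<Rightarrow> 'a set \<Rightarrow> 'a set \<Rightarrow> bool" where
  "graded_ideal sc mul A0 A1 I \<longleftrightarrow>
     module.subspace sc I \<and>
     (\<forall>x\<in>I. \<forall>a. mul a x \<in> I \<and> mul x a \<in> I) \<and>
     (\<forall>x\<in>I. \<exists>u\<in>I \<inter> A0. \<exists>v\<in>I \<inter> A1. x = u + v)"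

definition simple_superalgebra ::
  "('k::field \<Rightarrow> 'a::ab_group_add \<Rightarrow> 'a) \<Rightarrow> ('a \<Rightarrow> 'a \<Rightarrow> 'a) \<Rightarrow> 'a set \<Rightarrow> 'a set \<Rightarrow> bool" where
  "simple_superalgebra sc mul A0 A1 \<longleftrightarrow>
     (\<exists>x y. mul x y \<noteq> 0) \<and>
     (\<forall>I. graded_ideal sc mul A0 A1 I \<longrightarrow> I = {0} \<or> I = UNIV)"

definition supercommutative :: "('a::ab_group_add \<Rightarrow> 'a \<Rightarrow> 'a) \<Rightarrow> 'a set \<Rightarrow> 'a set \<Rightarrow> bool" where
  "supercommutative mul A0 A1 \<longleftrightarrow>
     (\<forall>x\<in>A0. \<forall>y\<in>A0 \<union> A1. mul x y = mul y x) \<and>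
     (\<forall>x\<in>A1. \<forall>y\<in>A1. mul x y = - mul y x)"

definition even_symmetric_structure ::
  "('k::field \<Rightarrow> 'a::ab_group_add \<Rightarrow> 'a) \<Rightarrow> ('a \<Rightarrow> 'a \<Rightarrow> 'a) \<Rightarrow> 'a set \<Rightarrow> 'a set
    \<Rightarrow> ('a \<Rightarrow> 'a \<Rightarrow> 'k) \<Rightarrow> bool" where
  "even_symmetric_structure sc mul A0 A1 B \<longleftrightarrow>
     (\<forall>x y z. B (x + y) z = B x z + B y z) \<and>
     (\<forall>x y z. B x (y + z) = B x y + B x z) \<and>
     (\<forall>c x y. B (sc c x) y = c * B x y) \<and>
     (\<forall>c x y. B x (sc c y) = c * B x y) \<and>
     (\<forall>x\<in>A0. \<forall>y\<in>A1. B x y = 0 \<and> B y x = 0) \<and>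
     (\<forall>x\<in>A0. \<forall>y\<in>A0 \<union> A1. B x y = B y x) \<and>
     (\<forall>x\<in>A1. \<forall>y\<in>A1. B x y = - B y x) \<and>
     (\<forall>x y z. B (mul x y) z = B x (mul y z)) \<and>
     (\<forall>x. (\<forall>y. B x y = 0) \<longrightarrow> x = 0)"

definition admits_ess ::
  "('k::field \<Rightarrow> 'a::ab_group_add \<Rightarrow> 'a) \<Rightarrow> ('a \<Rightarrow> 'a \<Rightarrow> 'a) \<Rightarrow> 'a set \<Rightarrow> 'a set \<Rightarrow> bool" where
  "admits_ess sc mul A0 A1 \<longleftrightarrow> (\<exists>B. even_symmetric_structure sc mul A0 A1 B)"

text \<open>n x n matrices over 'k are represented as functions nat => nat => 'k vanishing
  outside {0..<n} x {0..<n}, where n = r + s.\<close>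
definition mat_carrier :: "nat \<Rightarrow> (nat \<Rightarrow> nat \<Rightarrow> 'k::field) set" where
  "mat_carrier n = {X. \<forall>i j. (n \<le> i \<or> n \<le> j) \<longrightarrow> X i j = 0}"

definition mat_add :: "(nat \<Rightarrow> nat \<Rightarrow> 'k::field) \<Rightarrow> (nat \<Rightarrow> nat \<Rightarrow> 'k) \<Rightarrow> nat \<Rightarrow> nat \<Rightarrow> 'k" where
  "mat_add X Y = (\<lambda>i j. X i j + Y i j)"

definition mat_smult :: "'k::field \<Rightarrow> (nat \<Rightarrow> nat \<Rightarrow> 'k) \<Rightarrow> nat \<Rightarrow> nat \<Rightarrow> 'k" where
  "mat_smult c X = (\<lambda>i j. c * X i j)"

definition mat_mult :: "nat \<Rightarrow> (nat \<Rightarrow> nat \<Rightarrow> 'k::field) \<Rightarrow> (nat \<Rightarrow> nat \<Rightarrow> 'k) \<Rightarrow> nat \<Rightarrow> nat \<Rightarrow> 'k" where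
  "mat_mult n X Y = (\<lambda>i j. \<Sum>k<n. X i k * Y k j)"

text \<open>Even part: block-diagonal; odd part: block-off-diagonal (w.r.t. blocks of size r, s).\<close>
definition mat_even :: "nat \<Rightarrow> nat \<Rightarrow> (nat \<Rightarrow> nat \<Rightarrow> 'k::field) set" where
  "mat_even r s = {X \<in> mat_carrier (r + s). \<forall>i j. (i < r) \<noteq> (j < r) \<longrightarrow> X i j = 0}"

definition mat_odd :: "nat \<Rightarrow> nat \<Rightarrow> (nat \<Rightarrow> nat \<Rightarrow> 'k::field) set" where
  "mat_odd r s = {X \<in> mat_carrier (r + s). \<forall>i j. (i < r) = (j < r) \<longrightarrow> X i j = 0}"

definition iso_Mrs ::
  "('k::field \<Rightarrow> 'a::ab_group_add \<Rightarrow> 'a) \<Rightarrow> ('a \<Rightarrow> 'a \<Rightarrow> 'a) \<Rightarrow> 'a set \<Rightarrow> 'a set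
    \<Rightarrow> nat \<Rightarrow> nat \<Rightarrow> bool" where
  "iso_Mrs sc mul A0 A1 r s \<longleftrightarrow>
     (\<exists>f :: 'a \<Rightarrow> nat \<Rightarrow> nat \<Rightarrow> 'k.
        bij_betw f UNIV (mat_carrier (r + s)) \<and>
        (\<forall>x y. f (x + y) = mat_add (f x) (f y)) \<and>
        (\<forall>c x. f (sc c x) = mat_smult c (f x)) \<and>
        (\<forall>x y. f (mul x y) = mat_mult (r + s) (f x) (f y)) \<and>
        f ` A0 = mat_even r s \<and>
        f ` A1 = mat_odd r s)"

end

theory Submission
  imports Defs
begin

text \<open>
  Let \<open>L\<close> be a minimal graded left ideal of \<open>A\<close>. Since \<open>\<bbbK>\<close> is algebraically closed, right
  multiplication by an even element of \<open>L\<close> has an eigenvector, and by minimality it acts on \<open>L\<close>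
  as a scalar (Schur). Rescaling gives an even idempotent \<open>e \<in> L\<close> acting as the identity on \<open>L\<close>,
  and \<open>e A\<^sub>0 e = \<bbbK> e\<close>. The even-symmetric form forces \<open>B(e,e) \<noteq> 0\<close>; for odd \<open>w = eae\<close> one gets
  \<open>B(e,w\<^sup>2) = B(w,w) = 0\<close> (characteristic \<open>\<noteq> 2\<close>), so \<open>w\<^sup>2 = 0\<close> and then \<open>w = 0\<close>. Hence \<open>eAe = \<bbbK> e\<close>,
  and multiplication \<open>eA \<times> L \<rightarrow> eAe\<close> is a nondegenerate pairing of graded spaces. Homogeneous dual
  bases \<open>x\<^sub>i \<in> L\<close>, \<open>y\<^sub>i \<in> eA\<close> (even ones first) give the isomorphism \<open>a \<mapsto> (y\<^sub>i a x\<^sub>j)\<^sub>i\<^sub>j\<close> onto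
  \<open>M_{r,s}(\<bbbK>)\<close>, with \<open>r \<ge> 1\<close> because \<open>e\<close> is even.

  Conversely, \<open>(X, Y) \<mapsto> str(XY)\<close> is an even-symmetric structure on \<open>M_{r,s}(\<bbbK>)\<close>, and for
  \<open>r + s \<ge> 2\<close> the homogeneous matrix units \<open>E\<^sub>0\<^sub>0\<close> and \<open>E\<^sub>0\<^sub>1\<close> do not commute, so only
  \<open>M_{1,0}(\<bbbK>) = \<bbbK>\<close> is supercommutative.
\<close>

definition poly_apply ::
    "('a::field \<Rightarrow> 'b::ab_group_add \<Rightarrow> 'b) \<Rightarrow> ('b \<Rightarrow> 'b) \<Rightarrow> 'a poly \<Rightarrow> 'b \<Rightarrow> 'b" where
  "poly_apply scale f p x = (\<Sum>k\<le>degree p. scale (poly.coeff p k) ((f ^^ k) x))"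

context vector_space
begin

lemma poly_apply_eq_sum:
  assumes "degree p \<le> n"
  shows "poly_apply scale f p x = (\<Sum>k\<le>n. poly.coeff p k *s (f ^^ k) x)"
  unfolding poly_apply_def
  by (rule sum.mono_neutral_left) (use assms in \<open>auto intro: coeff_eq_0\<close>)

lemma poly_apply_add: "poly_apply scale f (p + q) x = poly_apply scale f p x + poly_apply scale f q x"
proof -
  define n where "n = max (degree p) (degree q)"
  have "degree (p + q) \<le> n" unfolding n_def by (rule degree_add_le) auto
  then show ?thesis
    by (simp add: poly_apply_eq_sum[of _ n] n_def scale_left_distrib sum.distrib)
qed

lemma poly_apply_smult: "poly_apply scale f (smult c p) x = c *s poly_apply scale f p x"
  by (cases "c = 0") (simp_all add: poly_apply_def scale_sum_right)

lemma poly_apply_pCons: "poly_apply scale f (pCons a p) x = a *s x + poly_apply scale f p (f x)"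
proof (cases "p = 0")
  case False
  then have "degree (pCons a p) = Suc (degree p)" by simp
  then show ?thesis
    unfolding poly_apply_def by (simp only: sum.atMost_Suc_shift) (simp add: funpow_swap1)
qed (simp add: poly_apply_def)

context
  fixes f :: "'b \<Rightarrow> 'b"
  assumes f_add: "\<And>x y. f (x + y) = f x + f y"
    and f_scale: "\<And>c x. f (c *s x) = c *s f x"
begin

lemma funpow_map_add: "(f ^^ k) (x + y) = (f ^^ k) x + (f ^^ k) y"
  by (induction k) (simp_all add: f_add)

lemma funpow_map_scale: "(f ^^ k) (c *s x) = c *s (f ^^ k) x"
  by (induction k) (simp_all add: f_scale)

lemma poly_apply_add_right: "poly_apply scale f p (x + y) = poly_apply scale f p x + poly_apply scale f p y"
  by (simp add: poly_apply_def funpow_map_add scale_right_distrib sum.distrib)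

lemma poly_apply_scale_right: "poly_apply scale f p (c *s x) = c *s poly_apply scale f p x"
  by (simp add: poly_apply_def funpow_map_scale scale_sum_right mult.commute)

lemma poly_apply_linear_factor:
  "poly_apply scale f ([:- \<mu>, 1:] * q) x = poly_apply scale f q (f x - \<mu> *s x)"
proof -
  have "[:- \<mu>, 1:] * q = smult (- \<mu>) q + pCons 0 q" by simp
  then have "poly_apply scale f ([:- \<mu>, 1:] * q) x = - \<mu> *s poly_apply scale f q x + poly_apply scale f q (f x)"
    by (simp only: poly_apply_add poly_apply_smult poly_apply_pCons) simp
  also have "\<dots> = poly_apply scale f q (f x - \<mu> *s x)"
    using poly_apply_add_right[of q "f x" "- \<mu> *s x"] poly_apply_scale_right[of q "- \<mu>" x]
    by (simp add: add.commute)
  finally show ?thesis .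
qed

lemma eigenvector_of_annihilating_poly:
  assumes "alg_closed TYPE('a)"
    and V: "subspace V" "\<And>x. x \<in> V \<Longrightarrow> f x \<in> V"
    and "p \<noteq> 0" "z \<in> V" "z \<noteq> 0" "poly_apply scale f p z = 0"
  shows "\<exists>\<mu> v. v \<in> V \<and> v \<noteq> 0 \<and> f v = \<mu> *s v"
  using assms(4-)
proof (induction "degree p" arbitrary: p z rule: less_induct)
  case less
  show ?case
  proof (cases "degree p = 0")
    case True
    then have "poly_apply scale f p z = poly.coeff p 0 *s z" by (simp add: poly_apply_def)
    moreover have "poly.coeff p 0 \<noteq> 0" using less.prems(1) True by (metis leading_coeff_0_iff)
    ultimately show ?thesis using less.prems by simp
  next
    case False
    then have "degree p \<ge> 1" by simp
    then obtain \<mu> where "poly p \<mu> = 0" using assms(1) unfolding alg_closed_def by blast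
    then obtain q where q: "p = [:- \<mu>, 1:] * q" by (meson dvdE poly_eq_0_iff_dvd)
    with less.prems have "q \<noteq> 0" by auto
    then have deg: "degree q < degree p"
      unfolding q by (subst degree_mult_eq) auto
    have q_ann: "poly_apply scale f q (f z - \<mu> *s z) = 0"
      using less.prems q poly_apply_linear_factor by simp
    show ?thesis
    proof (cases "f z - \<mu> *s z = 0")
      case True
      then show ?thesis using less.prems by auto
    next
      case False
      have "f z - \<mu> *s z \<in> V" using less.prems V subspace_diff subspace_scale by blast
      then show ?thesis using less.hyps[OF deg \<open>q \<noteq> 0\<close> _ False q_ann] by blast
    qed
  qed
qed

end

end

context finite_dimensional_vector_space
begin

lemma exists_annihilating_poly:
  "\<exists>p. p \<noteq> 0 \<and> poly_apply scale f p x = 0"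
proof -
  \<comment> \<open>the \<open>N + 1\<close> vectors \<open>f\<^sup>k x\<close>, \<open>k \<le> N = dim\<close>, are linearly dependent\<close>
  define N where "N = dim (UNIV :: 'b set)"
  define v where "v k = (f ^^ k) x" for k
  have "\<exists>c :: nat \<Rightarrow> 'a. (\<exists>k\<le>N. c k \<noteq> 0) \<and> (\<Sum>k\<le>N. c k *s v k) = 0"
  proof (cases "inj_on v {..N}")
    case True
    then have "card (v ` {..N}) = Suc N" by (simp add: card_image)
    then have "dependent (v ` {..N})"
      using independent_card_le_dim[of "v ` {..N}" UNIV] unfolding N_def by auto
    then obtain u where u: "\<exists>w\<in>v ` {..N}. u w \<noteq> 0" "(\<Sum>w\<in>v ` {..N}. u w *s w) = 0"
      using dependent_finite[of "v ` {..N}"] by auto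
    then show ?thesis
      using sum.reindex[OF True, of "\<lambda>w. u w *s w"] by (intro exI[of _ "u \<circ> v"]) auto
  next
    case False
    then obtain i j where ij: "i \<le> N" "j \<le> N" "i \<noteq> j" "v i = v j"
      unfolding inj_on_def by auto
    define c where "c k = (if k = i then 1 else if k = j then -1 else 0 :: 'a)" for k
    have "(\<Sum>k\<le>N. c k *s v k) = (\<Sum>k\<in>{i, j}. c k *s v k)"
      by (rule sum.mono_neutral_right) (auto simp: c_def ij)
    also have "\<dots> = 0" using ij by (simp add: c_def)
    finally show ?thesis using ij by (intro exI[of _ c]) (auto simp: c_def)
  qed
  then obtain c where c: "\<exists>k\<le>N. c k \<noteq> 0" "(\<Sum>k\<le>N. c k *s v k) = 0" by blast
  define p where "p = (\<Sum>k\<le>N. monom (c k) k)"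
  have coeff_p: "poly.coeff p k = (if k \<le> N then c k else 0)" for k
    unfolding p_def coeff_sum by (auto simp: if_distrib sum.delta)
  have "degree p \<le> N" by (rule degree_le) (simp add: coeff_p)
  then have "poly_apply scale f p x = 0"
    using c(2) by (simp add: poly_apply_eq_sum coeff_p v_def)
  moreover have "p \<noteq> 0" using c(1) coeff_p by (metis coeff_0)
  ultimately show ?thesis by blast
qed

lemma exists_eigenvector:
  assumes "alg_closed TYPE('a)"
    and f_add: "\<And>x y. f (x + y) = f x + f y" and f_scale: "\<And>c x. f (c *s x) = c *s f x"
    and V: "subspace V" "\<And>x. x \<in> V \<Longrightarrow> f x \<in> V" and "V \<noteq> {0}"
  shows "\<exists>\<mu> v. v \<in> V \<and> v \<noteq> 0 \<and> f v = \<mu> *s v"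
proof -
  obtain z where "z \<in> V" "z \<noteq> 0" using assms(6) V(1) subspace_0 by blast
  moreover obtain p where "p \<noteq> 0" "poly_apply scale f p z = 0" using exists_annihilating_poly by blast
  ultimately show ?thesis
    using eigenvector_of_annihilating_poly[OF f_add f_scale assms(1) V] by blast
qed

end

lemma sum_lessThan_delta:
  fixes g :: "nat \<Rightarrow> 'a::semiring_1"
  assumes "j < k"
  shows "(\<Sum>i<k. g i * (if i = j then 1 else 0)) = g j"
  using assms by (simp add: if_distrib[of "\<lambda>c. g _ * c"] sum.delta cong: if_cong)

lemma sum_lessThan_add_split:
  fixes r s :: nat
  shows "(\<Sum>i<r + s. f i) = (\<Sum>i<r. f i) + (\<Sum>i<s. f (r + i))"
  by (induction s) (simp_all add: add.assoc)

definition biorthogonal :: "('b \<Rightarrow> 'c \<Rightarrow> 'a::zero_neq_one) \<Rightarrow> nat \<Rightarrow> (nat \<Rightarrow> 'c) \<Rightarrow> (nat \<Rightarrow> 'b) \<Rightarrow> bool" where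
  "biorthogonal pair k xs ys \<longleftrightarrow> (\<forall>i<k. \<forall>j<k. pair (ys i) (xs j) = (if i = j then 1 else 0))"

context finite_dimensional_vector_space
begin

context
  fixes pair :: "'b \<Rightarrow> 'b \<Rightarrow> 'a"
  assumes pair_add_left: "\<And>y y' x. pair (y + y') x = pair y x + pair y' x"
    and pair_scale_left: "\<And>c y x. pair (c *s y) x = c * pair y x"
    and pair_add_right: "\<And>y x x'. pair y (x + x') = pair y x + pair y x'"
    and pair_scale_right: "\<And>c y x. pair y (c *s x) = c * pair y x"
begin

lemma pair_diff_left: "pair (y - y') x = pair y x - pair y' x"
  using pair_add_left[of "y - y'" y' x] by simp

lemma pair_diff_right: "pair y (x - x') = pair y x - pair y x'"
  using pair_add_right[of y "x - x'" x'] by simp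

lemma pair_zero_left [simp]: "pair 0 x = 0"
  using pair_scale_left[where c = 0 and y = 0] by simp

lemma pair_zero_right [simp]: "pair y 0 = 0"
  using pair_scale_right[where c = 0 and x = 0] by simp

lemma pair_sum_left: "pair (sum g I) x = (\<Sum>i\<in>I. pair (g i) x)"
  by (induction I rule: infinite_finite_induct) (auto simp: pair_add_left)

lemma pair_sum_right: "pair y (sum g I) = (\<Sum>i\<in>I. pair y (g i))"
  by (induction I rule: infinite_finite_induct) (auto simp: pair_add_right)

lemma pair_expansion:
  assumes "biorthogonal pair k xs ys" "j < k"
  shows "pair (ys j) (\<Sum>i<k. c i *s xs i) = c j"
proof -
  have "pair (ys j) (\<Sum>i<k. c i *s xs i) = (\<Sum>i<k. c i * (if i = j then 1 else 0))"
    using assms unfolding biorthogonal_def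
    by (auto simp: pair_sum_right pair_scale_right intro!: sum.cong)
  then show ?thesis using sum_lessThan_delta[OF assms(2)] by simp
qed

lemma biorthogonal_card_le:
  assumes "biorthogonal pair k xs ys"
  shows "k \<le> dim (UNIV :: 'b set)"
proof -
  have inj: "inj_on xs {..<k}"
    using assms unfolding biorthogonal_def inj_on_def by (metis lessThan_iff zero_neq_one)
  have "independent (xs ` {..<k})"
  proof
    assume "dependent (xs ` {..<k})"
    then obtain u where u: "\<exists>v\<in>xs ` {..<k}. u v \<noteq> 0" "(\<Sum>v\<in>xs ` {..<k}. u v *s v) = 0"
      using dependent_finite[of "xs ` {..<k}"] by auto
    have "(\<Sum>i<k. u (xs i) *s xs i) = 0"
      using u(2) sum.reindex[OF inj, of "\<lambda>v. u v *s v"] by simp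
    then have "u (xs j) = 0" if "j < k" for j
      using pair_expansion[OF assms that, of "u \<circ> xs"] by simp
    then show False using u(1) by auto
  qed
  then show ?thesis
    using independent_card_le_dim[of "xs ` {..<k}" UNIV] card_image[OF inj] by simp
qed

context
  fixes V W :: "'b set"
  assumes V: "subspace V" and W: "subspace W"
    and nondegenerate: "\<And>x. x \<in> V \<Longrightarrow> x \<noteq> 0 \<Longrightarrow> \<exists>y\<in>W. pair y x \<noteq> 0"
begin

lemma biorthogonal_extend:
  assumes bo: "biorthogonal pair k xs ys" and in_VW: "\<forall>i<k. xs i \<in> V \<and> ys i \<in> W"
    and "z \<in> V" and incomplete: "(\<Sum>i<k. pair (ys i) z *s xs i) \<noteq> z"
  shows "\<exists>x y. x \<in> V \<and> y \<in> W \<and> biorthogonal pair (Suc k) (xs(k := x)) (ys(k := y))"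
proof -
  \<comment> \<open>Gram--Schmidt step: \<open>x\<close> is the part of \<open>z\<close> not yet expanded, \<open>y\<close> a dual vector made
    orthogonal to \<open>xs\<close>\<close>
  define x where "x = z - (\<Sum>i<k. pair (ys i) z *s xs i)"
  have "x \<in> V" unfolding x_def using \<open>z \<in> V\<close> in_VW V
    by (intro subspace_diff subspace_sum subspace_scale) auto
  moreover have "x \<noteq> 0" using incomplete unfolding x_def by simp
  ultimately obtain y0 where y0: "y0 \<in> W" "pair y0 x \<noteq> 0" using nondegenerate by blast
  have ys_x: "pair (ys j) x = 0" if "j < k" for j
    unfolding x_def pair_diff_right pair_expansion[OF bo that] by simp
  define y where "y = inverse (pair y0 x) *s (y0 - (\<Sum>i<k. pair y0 (xs i) *s ys i))"
  have "y \<in> W" unfolding y_def using y0(1) in_VW W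
    by (intro subspace_diff subspace_sum subspace_scale) auto
  have y_xs: "pair y (xs j) = 0" if "j < k" for j
  proof -
    have "pair (\<Sum>i<k. pair y0 (xs i) *s ys i) (xs j) = (\<Sum>i<k. pair y0 (xs i) * (if i = j then 1 else 0))"
      using bo that unfolding biorthogonal_def by (auto simp: pair_sum_left pair_scale_left intro!: sum.cong)
    also have "\<dots> = pair y0 (xs j)" by (rule sum_lessThan_delta[OF that])
    finally show ?thesis unfolding y_def pair_scale_left pair_diff_left by simp
  qed
  have y_x: "pair y x = 1"
    using y0(2) ys_x unfolding y_def pair_scale_left pair_diff_left pair_sum_left
    by (simp add: pair_scale_left)
  have "biorthogonal pair (Suc k) (xs(k := x)) (ys(k := y))"
    using bo ys_x y_xs y_x unfolding biorthogonal_def by (auto simp: less_Suc_eq)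
  then show ?thesis using \<open>x \<in> V\<close> \<open>y \<in> W\<close> by blast
qed

lemma exists_dual_basis:
  "\<exists>k xs ys. (\<forall>i<k. xs i \<in> V \<and> ys i \<in> W) \<and> biorthogonal pair k xs ys \<and>
     (\<forall>z\<in>V. (\<Sum>i<k. pair (ys i) z *s xs i) = z)"
proof (rule ccontr)
  assume incomplete: "\<not> ?thesis"
  have "\<exists>xs ys. (\<forall>i<k. xs i \<in> V \<and> ys i \<in> W) \<and> biorthogonal pair k xs ys" for k
  proof (induction k)
    case 0
    then show ?case by (simp add: biorthogonal_def)
  next
    case (Suc k)
    then obtain xs ys where fam: "\<forall>i<k. xs i \<in> V \<and> ys i \<in> W" "biorthogonal pair k xs ys" by blast
    then obtain z where "z \<in> V" "(\<Sum>i<k. pair (ys i) z *s xs i) \<noteq> z" using incomplete by blast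
    then obtain x y where "x \<in> V" "y \<in> W" "biorthogonal pair (Suc k) (xs(k := x)) (ys(k := y))"
      using biorthogonal_extend[OF fam(2,1)] by blast
    moreover have "\<forall>i<Suc k. (xs(k := x)) i \<in> V \<and> (ys(k := y)) i \<in> W"
      using fam(1) \<open>x \<in> V\<close> \<open>y \<in> W\<close> by (auto simp: less_Suc_eq)
    ultimately show ?case by blast
  qed
  then obtain xs ys where "biorthogonal pair (Suc (dim (UNIV :: 'b set))) xs ys" by blast
  then show False using biorthogonal_card_le by fastforce
qed

end

end

end

lemma mat_mult_assoc: "mat_mult n (mat_mult n X Y) Z = mat_mult n X (mat_mult n Y Z)"
proof (intro ext)
  fix i j
  have "mat_mult n (mat_mult n X Y) Z i j = (\<Sum>k<n. \<Sum>l<n. X i l * Y l k * Z k j)"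
    unfolding mat_mult_def by (simp add: sum_distrib_right)
  also have "\<dots> = (\<Sum>l<n. \<Sum>k<n. X i l * Y l k * Z k j)" by (rule sum.swap)
  also have "\<dots> = mat_mult n X (mat_mult n Y Z) i j"
    unfolding mat_mult_def by (simp add: sum_distrib_left mult.assoc)
  finally show "mat_mult n (mat_mult n X Y) Z i j = mat_mult n X (mat_mult n Y Z) i j" .
qed

definition mat_Adeg :: "nat \<Rightarrow> nat \<Rightarrow> bool \<Rightarrow> (nat \<Rightarrow> nat \<Rightarrow> 'k::field) set" where
  "mat_Adeg r s b = (if b then mat_odd r s else mat_even r s)"

lemma mat_Adeg_iff:
  "X \<in> mat_Adeg r s b \<longleftrightarrow> X \<in> mat_carrier (r + s) \<and> (\<forall>i j. X i j \<noteq> 0 \<longrightarrow> ((i < r) \<noteq> (j < r)) = b)"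
  unfolding mat_Adeg_def mat_even_def mat_odd_def by (cases b) auto

definition mat_unit :: "nat \<Rightarrow> nat \<Rightarrow> nat \<Rightarrow> nat \<Rightarrow> 'k::field" where
  "mat_unit i j = (\<lambda>a b. if a = i \<and> b = j then 1 else 0)"

lemma mat_unit_carrier: "i < n \<Longrightarrow> j < n \<Longrightarrow> mat_unit i j \<in> mat_carrier n"
  unfolding mat_unit_def mat_carrier_def by auto

lemma mat_unit_Adeg:
  assumes "i < r + s" "j < r + s"
  shows "mat_unit i j \<in> mat_Adeg r s ((i < r) \<noteq> (j < r))"
  using mat_unit_carrier[OF assms] unfolding mat_Adeg_iff by (auto simp: mat_unit_def)

lemma mat_mult_unit:
  assumes "j < n"
  shows "mat_mult n (mat_unit i j) (mat_unit k l) = (if j = k then mat_unit i l else (\<lambda>_ _. 0))"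
proof (intro ext)
  fix a b
  have entry: "mat_unit i j a m * mat_unit k l m b
      = (if m = j then mat_unit i l a b * (if j = k then 1 else 0) else 0)" for m :: nat
    by (auto simp: mat_unit_def)
  show "mat_mult n (mat_unit i j) (mat_unit k l) a b = (if j = k then mat_unit i l else (\<lambda>_ _. 0)) a b"
    unfolding mat_mult_def entry using assms by (simp add: sum.delta)
qed

definition supersign :: "nat \<Rightarrow> nat \<Rightarrow> 'k::field" where
  "supersign r i = (if i < r then 1 else - 1)"

definition supertrace_form :: "nat \<Rightarrow> nat \<Rightarrow> (nat \<Rightarrow> nat \<Rightarrow> 'k::field) \<Rightarrow> (nat \<Rightarrow> nat \<Rightarrow> 'k) \<Rightarrow> 'k" where
  "supertrace_form r s X Y = (\<Sum>i<r + s. supersign r i * mat_mult (r + s) X Y i i)"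

lemma supertrace_form_expand:
  "supertrace_form r s X Y = (\<Sum>i<r + s. \<Sum>k<r + s. supersign r i * X i k * Y k i)"
  unfolding supertrace_form_def mat_mult_def by (simp add: sum_distrib_left mult.assoc)

lemma supertrace_form_swap:
  "supertrace_form r s Y X = (\<Sum>i<r + s. \<Sum>k<r + s. supersign r k * X i k * Y k i)"
  unfolding supertrace_form_expand by (subst sum.swap) (simp add: mult_ac)

lemma supertrace_form_add_left:
  "supertrace_form r s (mat_add X Y) Z = supertrace_form r s X Z + supertrace_form r s Y Z"
  unfolding supertrace_form_expand mat_add_def by (simp add: algebra_simps sum.distrib)

lemma supertrace_form_add_right:
  "supertrace_form r s X (mat_add Y Z) = supertrace_form r s X Y + supertrace_form r s X Z"
  unfolding supertrace_form_expand mat_add_def by (simp add: algebra_simps sum.distrib)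

lemma supertrace_form_smult_left:
  "supertrace_form r s (mat_smult c X) Y = c * supertrace_form r s X Y"
  unfolding supertrace_form_expand mat_smult_def by (simp add: sum_distrib_left mult_ac)

lemma supertrace_form_smult_right:
  "supertrace_form r s X (mat_smult c Y) = c * supertrace_form r s X Y"
  unfolding supertrace_form_expand mat_smult_def by (simp add: sum_distrib_left mult_ac)

lemma supertrace_form_assoc:
  "supertrace_form r s (mat_mult (r + s) X Y) Z = supertrace_form r s X (mat_mult (r + s) Y Z)"
  unfolding supertrace_form_def mat_mult_assoc ..

lemma supertrace_form_even_odd:
  assumes "X \<in> mat_even r s" "Y \<in> mat_odd r s"
  shows "supertrace_form r s X Y = 0" and "supertrace_form r s Y X = 0"
proof -
  have vanish: "X i k * Y k i = 0" for i k
    using assms unfolding mat_even_def mat_odd_def by (cases "(i < r) = (k < r)") auto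
  show "supertrace_form r s X Y = 0" "supertrace_form r s Y X = 0"
    unfolding supertrace_form_expand[of r s X Y] supertrace_form_swap[of r s Y X]
    by (simp_all add: mult.assoc vanish)
qed

lemma supertrace_form_even_sym:
  assumes "X \<in> mat_even r s"
  shows "supertrace_form r s X Y = supertrace_form r s Y X"
proof -
  have sign: "supersign r i * X i k * Y k i = supersign r k * X i k * Y k i" for i k
    using assms unfolding mat_even_def supersign_def by (cases "(i < r) = (k < r)") auto
  show ?thesis
    unfolding supertrace_form_expand[of r s X Y] supertrace_form_swap[of r s Y X]
    by (intro sum.cong refl) (rule sign)
qed

lemma supertrace_form_odd_antisym:
  assumes "X \<in> mat_odd r s"
  shows "supertrace_form r s X Y = - supertrace_form r s Y X"
proof -
  have sign: "supersign r i * X i k * Y k i = - (supersign r k * X i k * Y k i)" for i k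
    using assms unfolding mat_odd_def supersign_def by (cases "(i < r) = (k < r)") auto
  show ?thesis
    unfolding supertrace_form_expand[of r s X Y] supertrace_form_swap[of r s Y X] sign
    by (simp add: sum_negf)
qed

lemma supertrace_form_unit:
  assumes "i < r + s" "j < r + s"
  shows "supertrace_form r s X (mat_unit j i) = supersign r i * X i j"
proof -
  have diag: "mat_mult (r + s) X (mat_unit j i) a a = (if a = i then X i j else 0)" for a
    using assms(2) by (simp add: mat_mult_def mat_unit_def if_distrib sum.delta cong: if_cong)
  show ?thesis
    unfolding supertrace_form_def diag using assms(1) by (simp add: if_distrib sum.delta cong: if_cong)
qed

lemma supertrace_form_nondegenerate:
  assumes "X \<in> mat_carrier (r + s)" "\<And>Y. Y \<in> mat_carrier (r + s) \<Longrightarrow> supertrace_form r s X Y = 0"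
  shows "X = (\<lambda>_ _. 0)"
proof (intro ext)
  fix i j
  show "X i j = 0"
  proof (cases "i < r + s \<and> j < r + s")
    case True
    then have "supersign r i * X i j = 0"
      using assms(2)[OF mat_unit_carrier] supertrace_form_unit by metis
    then show ?thesis by (simp add: supersign_def split: if_splits)
  qed (use assms(1) in \<open>auto simp: mat_carrier_def\<close>)
qed

locale assoc_superalgebra =
  fixes sc :: "'k::field \<Rightarrow> 'a::ab_group_add \<Rightarrow> 'a"
    and mul :: "'a \<Rightarrow> 'a \<Rightarrow> 'a"
    and A0 A1 :: "'a set"
  assumes superalgebra: "superalgebra sc mul A0 A1"
    and associative: "associative_mul mul"
begin

sublocale vector_space sc
  using superalgebra unfolding superalgebra_def by blast

lemma add_mul: "mul (x + y) z = mul x z + mul y z"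
  using superalgebra by (simp add: superalgebra_def)

lemma mul_add: "mul x (y + z) = mul x y + mul x z"
  using superalgebra by (simp add: superalgebra_def)

lemma scale_mul: "mul (sc c x) y = sc c (mul x y)"
  using superalgebra by (simp add: superalgebra_def)

lemma mul_scale: "mul x (sc c y) = sc c (mul x y)"
  using superalgebra by (simp add: superalgebra_def)

lemma mul_assoc: "mul (mul x y) z = mul x (mul y z)"
  using associative unfolding associative_mul_def by blast

lemma zero_mul [simp]: "mul 0 x = 0"
  using add_mul[of 0 0 x] by simp

lemma mul_zero [simp]: "mul x 0 = 0"
  using mul_add[of x 0 0] by simp

lemma diff_mul: "mul (x - y) z = mul x z - mul y z"
  using add_mul[of "x - y" y z] by (simp add: algebra_simps)

lemma sum_mul: "mul (sum f I) z = (\<Sum>i\<in>I. mul (f i) z)"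
  by (induction I rule: infinite_finite_induct) (auto simp: add_mul)

lemma mul_sum: "mul z (sum f I) = (\<Sum>i\<in>I. mul z (f i))"
  by (induction I rule: infinite_finite_induct) (auto simp: mul_add)

text \<open>Degrees are booleans: \<open>Adeg False = A\<^sub>0\<close>, \<open>Adeg True = A\<^sub>1\<close>, and the degree of a product is \<open>\<noteq>\<close>.\<close>

definition Adeg :: "bool \<Rightarrow> 'a set" where
  "Adeg b = (if b then A1 else A0)"

lemma Adeg_False: "Adeg False = A0" and Adeg_True: "Adeg True = A1"
  by (simp_all add: Adeg_def)

lemma subspace_Adeg: "subspace (Adeg b)"
  using superalgebra by (simp add: superalgebra_def Adeg_def)

lemma Adeg_zero [simp]: "0 \<in> Adeg b"
  and Adeg_diff: "x \<in> Adeg b \<Longrightarrow> y \<in> Adeg b \<Longrightarrow> x - y \<in> Adeg b"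
  and Adeg_scale: "x \<in> Adeg b \<Longrightarrow> sc c x \<in> Adeg b"
  and Adeg_sum: "(\<And>i. i \<in> I \<Longrightarrow> f i \<in> Adeg b) \<Longrightarrow> sum f I \<in> Adeg b"
  using subspace_Adeg subspace_0 subspace_diff subspace_scale subspace_sum by metis+

lemma mul_Adeg: "x \<in> Adeg b \<Longrightarrow> y \<in> Adeg c \<Longrightarrow> mul x y \<in> Adeg (b \<noteq> c)"
  using superalgebra by (cases b; cases c) (simp_all add: superalgebra_def Adeg_def)

lemma Adeg_disjoint: "x \<in> Adeg b \<Longrightarrow> x \<in> Adeg (\<not> b) \<Longrightarrow> x = 0"
  using superalgebra by (cases b) (auto simp: superalgebra_def Adeg_def)

lemma Adeg_add_eq_zero:
  assumes "u \<in> Adeg b" "v \<in> Adeg (\<not> b)" "u + v = 0"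
  shows "u = 0" and "v = 0"
proof -
  have "u = 0 - v" using assms(3) by (simp add: eq_neg_iff_add_eq_0)
  then have "u \<in> Adeg (\<not> b)" using assms(2) Adeg_diff[OF Adeg_zero] by simp
  then show "u = 0" using assms(1) Adeg_disjoint by blast
  then show "v = 0" using assms(3) by simp
qed

definition proj :: "bool \<Rightarrow> 'a \<Rightarrow> 'a" where
  "proj b x = (SOME u. u \<in> Adeg b \<and> x - u \<in> Adeg (\<not> b))"

lemma proj_unique:
  assumes "u \<in> Adeg b" "x - u \<in> Adeg (\<not> b)"
  shows "proj b x = u"
proof -
  have ex: "\<exists>u. u \<in> Adeg b \<and> x - u \<in> Adeg (\<not> b)" using assms by blast
  have p: "proj b x \<in> Adeg b" "x - proj b x \<in> Adeg (\<not> b)"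
    using someI_ex[OF ex] unfolding proj_def by blast+
  have "proj b x - u + (u - proj b x) = 0" by simp
  moreover have "u - proj b x = (x - proj b x) - (x - u)" by simp
  ultimately have "proj b x - u = 0"
    using Adeg_add_eq_zero(1)[of "proj b x - u" b "u - proj b x"] Adeg_diff p assms by metis
  then show ?thesis by simp
qed

lemma proj_Adeg: "proj b x \<in> Adeg b" and proj_complement: "x - proj b x \<in> Adeg (\<not> b)"
proof -
  have "\<exists>u\<in>A0. \<exists>v\<in>A1. x = u + v" using superalgebra by (simp add: superalgebra_def)
  then obtain u v where "u \<in> A0" "v \<in> A1" "x = u + v" by blast
  then have "u \<in> Adeg False \<and> x - u \<in> Adeg (\<not> False)" "v \<in> Adeg True \<and> x - v \<in> Adeg (\<not> True)"
    by (simp_all add: Adeg_def)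
  then have "\<exists>u. u \<in> Adeg b \<and> x - u \<in> Adeg (\<not> b)" by (cases b; simp; blast)
  then show "proj b x \<in> Adeg b" "x - proj b x \<in> Adeg (\<not> b)"
    using someI_ex unfolding proj_def by (metis (mono_tags, lifting))+
qed

lemma proj_sum: "proj False x + proj True x = x"
  using proj_unique[where u = "x - proj False x" and b = True and x = x]
    proj_complement[where b = False and x = x] proj_Adeg[where b = False and x = x]
  by simp

lemma mul_split_left: "mul x y = mul (proj False x) y + mul (proj True x) y"
  using proj_sum[of x] add_mul by metis

lemma mul_split_right: "mul x y = mul x (proj False y) + mul x (proj True y)"
  using proj_sum[of y] mul_add by metis

lemma mul_proj_eq_zero_left:
  assumes "y \<in> Adeg c" "mul x y = 0"
  shows "mul (proj b x) y = 0"
proof -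
  have "mul (proj b x) y \<in> Adeg (b \<noteq> c)" "mul (proj (\<not> b) x) y \<in> Adeg (\<not> (b \<noteq> c))"
    using mul_Adeg[OF proj_Adeg[of b] assms(1)] mul_Adeg[OF proj_Adeg[of "\<not> b"] assms(1)]
    by (cases b; cases c; simp)+
  moreover have "mul (proj b x) y + mul (proj (\<not> b) x) y = 0"
    using assms(2) mul_split_left[of x y] by (cases b) (simp_all add: add.commute)
  ultimately show ?thesis by (rule Adeg_add_eq_zero(1))
qed

lemma mul_proj_eq_zero_right:
  assumes "x \<in> Adeg c" "mul x y = 0"
  shows "mul x (proj b y) = 0"
proof -
  have "mul x (proj b y) \<in> Adeg (c \<noteq> b)" "mul x (proj (\<not> b) y) \<in> Adeg (\<not> (c \<noteq> b))"
    using mul_Adeg[OF assms(1) proj_Adeg[of b]] mul_Adeg[OF assms(1) proj_Adeg[of "\<not> b"]]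
    by (cases b; cases c; simp)+
  moreover have "mul x (proj b y) + mul x (proj (\<not> b) y) = 0"
    using assms(2) mul_split_right[of x y] by (cases b) (simp_all add: add.commute)
  ultimately show ?thesis by (rule Adeg_add_eq_zero(1))
qed

lemma graded_idealI:
  assumes "subspace I" "\<And>a x. x \<in> I \<Longrightarrow> mul a x \<in> I" "\<And>a x. x \<in> I \<Longrightarrow> mul x a \<in> I"
    and "\<And>x. x \<in> I \<Longrightarrow> proj False x \<in> I"
  shows "graded_ideal sc mul A0 A1 I"
  unfolding graded_ideal_def
proof (intro conjI ballI allI)
  fix x assume "x \<in> I"
  moreover have "proj True x = x - proj False x" using proj_sum[of x] by (metis add_diff_cancel_left')
  ultimately have "proj True x \<in> I" using assms(1,4) subspace_diff by metis
  then show "\<exists>u\<in>I \<inter> A0. \<exists>v\<in>I \<inter> A1. x = u + v"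
    using assms(4)[OF \<open>x \<in> I\<close>] proj_Adeg proj_sum[of x] unfolding Adeg_def by (metis IntI)
qed (use assms in auto)

definition graded_left_ideal :: "'a set \<Rightarrow> bool" where
  "graded_left_ideal I \<longleftrightarrow> subspace I \<and> (\<forall>a. \<forall>x\<in>I. mul a x \<in> I) \<and> (\<forall>b. \<forall>x\<in>I. proj b x \<in> I)"

lemma graded_left_ideal_UNIV: "graded_left_ideal UNIV"
  unfolding graded_left_ideal_def by simp

text \<open>For odd \<open>w\<close> only the kernel of right multiplication (\<open>\<mu> = 0\<close>) is graded.\<close>

lemma graded_left_ideal_right_eigenspace:
  assumes J: "graded_left_ideal J" and w: "w \<in> Adeg c" and "c \<Longrightarrow> \<mu> = 0"
  shows "graded_left_ideal {z \<in> J. mul z w = sc \<mu> z}"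
  unfolding graded_left_ideal_def
proof (intro conjI allI ballI)
  show "subspace {z \<in> J. mul z w = sc \<mu> z}"
    using J unfolding graded_left_ideal_def subspace_def
    by (simp add: add_mul scale_mul scale_right_distrib mult.commute)
  show "mul a z \<in> {z \<in> J. mul z w = sc \<mu> z}" if "z \<in> {z \<in> J. mul z w = sc \<mu> z}" for a z
    using that J unfolding graded_left_ideal_def by (simp add: mul_assoc mul_scale)
  show "proj b z \<in> {z \<in> J. mul z w = sc \<mu> z}" if z: "z \<in> {z \<in> J. mul z w = sc \<mu> z}" for b z
  proof -
    define D where "D b' = mul (proj b' z) w - sc \<mu> (proj b' z)" for b'
    have D_deg: "D b' \<in> Adeg (b' \<noteq> c)" for b'
    proof (cases c)
      case True
      then show ?thesis unfolding D_def using assms(3) mul_Adeg[OF proj_Adeg w] by simp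
    next
      case False
      then show ?thesis unfolding D_def using mul_Adeg[OF proj_Adeg w]
        by (simp add: Adeg_diff Adeg_scale proj_Adeg)
    qed
    have "D b + D (\<not> b) = mul z w - sc \<mu> z"
      unfolding D_def using mul_split_left[of z w] proj_sum[of z]
      by (cases b) (simp_all add: algebra_simps scale_right_distrib[symmetric])
    then have "D b + D (\<not> b) = 0" using z by simp
    moreover have "D (\<not> b) \<in> Adeg (\<not> (b \<noteq> c))" using D_deg[of "\<not> b"] by simp
    ultimately have "D b = 0" using Adeg_add_eq_zero(1)[OF D_deg] by blast
    then show ?thesis using z J unfolding graded_left_ideal_def D_def by simp
  qed
qed

end

locale simple_assoc_superalgebra = assoc_superalgebra +
  assumes simple: "simple_superalgebra sc mul A0 A1"
begin

lemma graded_ideal_trivial: "graded_ideal sc mul A0 A1 I \<Longrightarrow> I \<noteq> UNIV \<Longrightarrow> I = {0}"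
  using simple unfolding simple_superalgebra_def by blast

lemma exists_mul_nonzero: "\<exists>x y. mul x y \<noteq> 0"
  using simple unfolding simple_superalgebra_def by blast

lemma right_annihilator_trivial:
  assumes "\<And>a. mul a z = 0"
  shows "z = 0"
proof -
  let ?I = "{z. \<forall>a. mul a z = 0}"
  have "graded_ideal sc mul A0 A1 ?I"
  proof (rule graded_idealI)
    show "subspace ?I" unfolding subspace_def by (simp add: mul_add mul_scale)
    show "mul a x \<in> ?I" if "x \<in> ?I" for a x using that by (simp add: mul_assoc[symmetric])
    show "mul x a \<in> ?I" if "x \<in> ?I" for a x using that by (simp add: mul_assoc[symmetric])
    show "proj False x \<in> ?I" if "x \<in> ?I" for x
    proof -
      have "mul (proj b a) (proj False x) = 0" for a b
        using that mul_proj_eq_zero_right[OF proj_Adeg] by blast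
      then have "mul a (proj False x) = 0" for a
        using mul_split_left[of a "proj False x"] by simp
      then show ?thesis by simp
    qed
  qed
  moreover have "?I \<noteq> UNIV" using exists_mul_nonzero by auto
  ultimately show ?thesis using graded_ideal_trivial assms by blast
qed

lemma exists_mul_mul_nonzero:
  assumes "d \<noteq> 0" "x \<in> Adeg c" "x \<noteq> 0"
  shows "\<exists>a. mul d (mul a x) \<noteq> 0"
proof -
  \<comment> \<open>the elements \<open>d\<close> with \<open>d A x = 0\<close> form a graded ideal, which is proper because \<open>x \<noteq> 0\<close>\<close>
  let ?I = "{d. \<forall>a. mul d (mul a x) = 0}"
  have "graded_ideal sc mul A0 A1 ?I"
  proof (rule graded_idealI)
    show "subspace ?I" unfolding subspace_def by (simp add: add_mul scale_mul)
    show "mul a d \<in> ?I" if "d \<in> ?I" for a d using that by (simp add: mul_assoc)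
    show "mul d a \<in> ?I" if "d \<in> ?I" for a d
    proof -
      have "mul (mul d a) (mul a' x) = mul d (mul (mul a a') x)" for a' by (simp add: mul_assoc)
      then show ?thesis using that by simp
    qed
    show "proj False d \<in> ?I" if "d \<in> ?I" for d
    proof -
      have "mul (proj False d) (mul (proj b a) x) = 0" for a b
        using that mul_proj_eq_zero_left[OF mul_Adeg[OF proj_Adeg assms(2)]] by blast
      then have "mul (proj False d) (mul a x) = 0" for a
        using mul_split_left[of a x] by (simp add: mul_add)
      then show ?thesis by simp
    qed
  qed
  moreover have "?I \<noteq> UNIV"
  proof
    assume "?I = UNIV"
    then have "mul a x = 0" for a using right_annihilator_trivial[of "mul a x"] by blast
    then show False using right_annihilator_trivial[of x] assms(3) by blast
  qed
  ultimately have "?I = {0}" by (rule graded_ideal_trivial)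
  then show ?thesis using assms(1) by blast
qed

end

locale fd_simple_superalgebra = simple_assoc_superalgebra sc mul A0 A1
  for sc :: "'k::field \<Rightarrow> 'a::ab_group_add \<Rightarrow> 'a" and mul A0 A1 +
  assumes fin_dim: "fin_dim sc" and alg_closed: "alg_closed TYPE('k)"
begin

definition basis :: "'a set" where
  "basis = (SOME B. finite B \<and> independent B \<and> span B = UNIV)"

lemma basis: "finite basis \<and> independent basis \<and> span basis = UNIV"
proof -
  obtain S where S: "finite S" "span S = UNIV" using fin_dim unfolding fin_dim_def by blast
  obtain B where B: "B \<subseteq> S" "independent B" "S \<subseteq> span B"
    using maximal_independent_subset[of S] by blast
  have "span S \<subseteq> span B" using B(3) span_minimal subspace_span by blast
  then have "span B = UNIV" using S(2) by auto
  moreover have "finite B" using B(1) S(1) finite_subset by blast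
  ultimately have "\<exists>B. finite B \<and> independent B \<and> span B = UNIV" using B(2) by blast
  then show ?thesis unfolding basis_def by (rule someI_ex)
qed

sublocale finite_dimensional_vector_space sc basis
  using basis by unfold_locales auto

definition minimal_graded_left_ideal :: "'a set \<Rightarrow> bool" where
  "minimal_graded_left_ideal I \<longleftrightarrow> graded_left_ideal I \<and> I \<noteq> {0} \<and>
     (\<forall>J. graded_left_ideal J \<longrightarrow> J \<subseteq> I \<longrightarrow> J = {0} \<or> J = I)"

lemma exists_minimal_graded_left_ideal: "\<exists>I. minimal_graded_left_ideal I"
proof -
  have "UNIV \<noteq> {0::'a}" using exists_mul_nonzero by auto
  then obtain L where L: "graded_left_ideal L" "L \<noteq> {0}"
    and least: "\<And>I. graded_left_ideal I \<and> I \<noteq> {0} \<Longrightarrow> dim L \<le> dim I"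
    using ex_has_least_nat[of "\<lambda>I. graded_left_ideal I \<and> I \<noteq> {0}" UNIV dim] graded_left_ideal_UNIV
    by blast
  have "J = {0} \<or> J = L" if "graded_left_ideal J" "J \<subseteq> L" for J
    using least[of J] subspace_dim_equal[of J L] that L(1) unfolding graded_left_ideal_def by blast
  then show ?thesis using L unfolding minimal_graded_left_ideal_def by blast
qed

definition L :: "'a set" where
  "L = (SOME I. minimal_graded_left_ideal I)"

lemma L_minimal: "minimal_graded_left_ideal L"
  unfolding L_def using exists_minimal_graded_left_ideal by (rule someI_ex)

lemma graded_left_ideal_L: "graded_left_ideal L"
  and L_nonzero: "L \<noteq> {0}"
  and graded_left_ideal_subset_L: "graded_left_ideal J \<Longrightarrow> J \<subseteq> L \<Longrightarrow> J = {0} \<or> J = L"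
  using L_minimal unfolding minimal_graded_left_ideal_def by blast+

lemma subspace_L: "subspace L"
  and L_mul: "x \<in> L \<Longrightarrow> mul a x \<in> L"
  and L_proj: "x \<in> L \<Longrightarrow> proj b x \<in> L"
  using graded_left_ideal_L unfolding graded_left_ideal_def by blast+

lemma exists_homogeneous_in_L: "\<exists>z\<in>L. \<exists>b. z \<in> Adeg b \<and> z \<noteq> 0"
proof -
  obtain z where "z \<in> L" "z \<noteq> 0" using L_nonzero subspace_L subspace_0 by blast
  then have "proj False z \<noteq> 0 \<or> proj True z \<noteq> 0" using proj_sum[of z] by auto
  then show ?thesis using \<open>z \<in> L\<close> L_proj proj_Adeg by blast
qed

lemma even_right_mul_scalar_on_L:
  assumes "w \<in> L" "w \<in> Adeg False"
  shows "\<exists>\<mu>. \<forall>z\<in>L. mul z w = sc \<mu> z"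
proof -
  obtain \<mu> v where v: "v \<in> L" "v \<noteq> 0" "mul v w = sc \<mu> v"
    using exists_eigenvector[OF alg_closed _ _ subspace_L, of "\<lambda>z. mul z w"] L_mul[OF assms(1)]
      L_nonzero by (auto simp: add_mul scale_mul)
  let ?E = "{z \<in> L. mul z w = sc \<mu> z}"
  have "?E = {0} \<or> ?E = L"
    using graded_left_ideal_subset_L graded_left_ideal_right_eigenspace[OF graded_left_ideal_L assms(2)] by blast
  moreover have "?E \<noteq> {0}" using v by blast
  ultimately show ?thesis by blast
qed

lemma odd_right_mul_on_L:
  assumes "w \<in> Adeg True"
  shows "(\<forall>z\<in>L. mul z w = 0) \<or> (\<forall>z\<in>L. mul z w = 0 \<longrightarrow> z = 0)"
proof -
  let ?K = "{z \<in> L. mul z w = sc 0 z}"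
  have "?K = {0} \<or> ?K = L"
    using graded_left_ideal_subset_L graded_left_ideal_right_eigenspace[OF graded_left_ideal_L assms] by blast
  then show ?thesis by auto
qed

lemma exists_even_right_action_on_L: "\<exists>x\<in>L. x \<in> Adeg False \<and> (\<exists>z\<in>L. mul z x \<noteq> 0)"
proof -
  obtain z b where z: "z \<in> L" "z \<in> Adeg b" "z \<noteq> 0" using exists_homogeneous_in_L by blast
  then obtain a where "mul z (mul a z) \<noteq> 0" using exists_mul_mul_nonzero by blast
  then obtain x where x: "x \<in> L" "mul z x \<noteq> 0" using L_mul[OF z(1)] by blast
  show ?thesis
  proof (cases "mul z (proj False x) = 0")
    case False
    then show ?thesis using z(1) x(1) L_proj proj_Adeg by blast
  next
    case True
    \<comment> \<open>right multiplication by the odd part \<open>y\<close> of \<open>x\<close> is injective on \<open>L\<close>, so \<open>y\<^sup>2\<close> will do\<close>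
    define y where "y = proj True x"
    have y: "y \<in> L" "y \<in> Adeg True" unfolding y_def using x(1) L_proj proj_Adeg by blast+
    have "mul z y \<noteq> 0" using True x(2) mul_split_right[of z x] unfolding y_def by simp
    then have inj: "\<forall>u\<in>L. mul u y = 0 \<longrightarrow> u = 0"
      using odd_right_mul_on_L[OF y(2)] z(1) by blast
    have "mul (mul z y) (mul y y) = mul (mul (mul z y) y) y" by (simp add: mul_assoc)
    also have "\<dots> \<noteq> 0"
      using inj L_mul[OF y(1)] \<open>mul z y \<noteq> 0\<close> by (metis L_mul)
    finally have "mul (mul z y) (mul y y) \<noteq> 0" .
    moreover have "mul y y \<in> L" "mul y y \<in> Adeg False" "mul z y \<in> L"
      using L_mul y mul_Adeg[OF y(2) y(2)] by auto
    ultimately show ?thesis by blast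
  qed
qed

lemma exists_right_identity_of_L:
  "\<exists>e. e \<in> L \<and> e \<in> Adeg False \<and> e \<noteq> 0 \<and> (\<forall>z\<in>L. mul z e = z)"
proof -
  obtain x z where x: "x \<in> L" "x \<in> Adeg False" and z: "z \<in> L" "mul z x \<noteq> 0"
    using exists_even_right_action_on_L by blast
  obtain \<mu> where \<mu>: "\<forall>z\<in>L. mul z x = sc \<mu> z" using even_right_mul_scalar_on_L[OF x] by blast
  with z have "\<mu> \<noteq> 0" by auto
  define e where "e = sc (inverse \<mu>) x"
  have e: "\<forall>u\<in>L. mul u e = u" unfolding e_def using \<mu> \<open>\<mu> \<noteq> 0\<close> by (simp add: mul_scale)
  moreover have "e \<in> L" "e \<in> Adeg False"
    unfolding e_def using x subspace_L subspace_scale Adeg_scale by blast+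
  moreover have "e \<noteq> 0" using e z(1) z(2) by auto
  ultimately show ?thesis by blast
qed

definition e :: 'a where
  "e = (SOME e. e \<in> L \<and> e \<in> Adeg False \<and> e \<noteq> 0 \<and> (\<forall>z\<in>L. mul z e = z))"

lemma e_L: "e \<in> L" and e_even: "e \<in> Adeg False" and e_nonzero: "e \<noteq> 0"
  and mul_e_right: "z \<in> L \<Longrightarrow> mul z e = z"
  using someI_ex[OF exists_right_identity_of_L] unfolding e_def[symmetric] by blast+

lemma e_idem: "mul e e = e"
  by (rule mul_e_right[OF e_L])

lemma corner_in_L: "mul (mul e a) e \<in> L"
  by (rule L_mul[OF e_L])

lemma e_mul_corner: "mul e (mul (mul e a) e) = mul (mul e a) e"
  by (simp add: mul_assoc[symmetric] e_idem)

lemma even_corner_scalar: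
  assumes "a \<in> Adeg False"
  shows "\<exists>c. mul (mul e a) e = sc c e"
proof -
  have "mul (mul e a) e \<in> Adeg False" using mul_Adeg[OF mul_Adeg[OF e_even assms] e_even] by simp
  then obtain \<mu> where "\<forall>z\<in>L. mul z (mul (mul e a) e) = sc \<mu> z"
    using even_right_mul_scalar_on_L[OF corner_in_L] by blast
  then show ?thesis using e_L e_mul_corner by metis
qed

end

locale ess_superalgebra = fd_simple_superalgebra sc mul A0 A1
  for sc :: "'k::field_char_0 \<Rightarrow> 'a::ab_group_add \<Rightarrow> 'a" and mul A0 A1 +
  fixes B :: "'a \<Rightarrow> 'a \<Rightarrow> 'k"
  assumes ess: "even_symmetric_structure sc mul A0 A1 B"
begin

lemma B_add_left: "B (x + y) z = B x z + B y z"
  and B_add_right: "B x (y + z) = B x y + B x z"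
  and B_scale_left: "B (sc c x) y = c * B x y"
  and B_scale_right: "B x (sc c y) = c * B x y"
  and B_assoc: "B (mul x y) z = B x (mul y z)"
  using ess by (simp_all add: even_symmetric_structure_def)

lemma B_nondegenerate: "(\<And>y. B x y = 0) \<Longrightarrow> x = 0"
  using ess unfolding even_symmetric_structure_def by blast

lemma B_even_odd: "x \<in> Adeg False \<Longrightarrow> y \<in> Adeg True \<Longrightarrow> B x y = 0"
  using ess by (simp add: even_symmetric_structure_def Adeg_def)

lemma B_even_sym:
  assumes "x \<in> Adeg False"
  shows "B x y = B y x"
proof -
  have "\<forall>x\<in>A0. \<forall>y\<in>A0 \<union> A1. B x y = B y x" using ess unfolding even_symmetric_structure_def by blast
  moreover have "x \<in> A0" "proj b y \<in> A0 \<union> A1" for b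
    using assms proj_Adeg[of b y] unfolding Adeg_def by (cases b; simp)+
  ultimately have "B x (proj b y) = B (proj b y) x" for b by blast
  then show ?thesis using proj_sum[of y] B_add_left B_add_right by metis
qed

lemma B_odd_self:
  assumes "w \<in> Adeg True"
  shows "B w w = 0"
proof -
  have "\<forall>x\<in>A1. \<forall>y\<in>A1. B x y = - B y x" using ess unfolding even_symmetric_structure_def by blast
  moreover have "w \<in> A1" using assms unfolding Adeg_def by simp
  ultimately have "B w w = - B w w" by blast
  then show ?thesis by simp
qed

lemma B_e_e_nonzero: "B e e \<noteq> 0"
proof
  assume Bee: "B e e = 0"
  have "B e a = 0" if a: "a \<in> Adeg False" for a
  proof -
    obtain c where c: "mul (mul e a) e = sc c e" using even_corner_scalar[OF a] by blast
    have "B e a = B (mul e e) a" by (simp add: e_idem)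
    also have "\<dots> = B (mul e a) e" using B_assoc B_even_sym[OF e_even] by metis
    also have "\<dots> = B (mul e e) (mul a e)" by (simp add: B_assoc e_idem)
    also have "\<dots> = B e (mul (mul e a) e)" by (simp add: B_assoc mul_assoc)
    also have "\<dots> = 0" using c Bee by (simp add: B_scale_right)
    finally show ?thesis .
  qed
  then have "B e y = 0" for y
    using proj_sum[of y] B_add_right B_even_odd[OF e_even proj_Adeg] proj_Adeg by (metis add_0)
  then show False using B_nondegenerate e_nonzero by blast
qed

lemma odd_corner_zero:
  assumes "a \<in> Adeg True"
  shows "mul (mul e a) e = 0"
proof (rule ccontr)
  define w where "w = mul (mul e a) e"
  assume "w \<noteq> 0"
  have w: "w \<in> L" "w \<in> Adeg True"
    unfolding w_def using corner_in_L mul_Adeg[OF mul_Adeg[OF e_even assms] e_even] by simp_all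
  have ew: "mul e w = w" unfolding w_def by (rule e_mul_corner)
  have "mul w w = mul (mul e (mul (mul a e) (mul e a))) e" unfolding w_def by (simp add: mul_assoc)
  moreover have "mul (mul a e) (mul e a) \<in> Adeg False"
    using mul_Adeg[OF mul_Adeg[OF assms e_even] mul_Adeg[OF e_even assms]] by simp
  ultimately obtain c where c: "mul w w = sc c e" using even_corner_scalar by metis
  have "c * B e e = B (mul e w) w" using c by (simp add: B_scale_right B_assoc)
  also have "\<dots> = 0" using ew B_odd_self[OF w(2)] by simp
  finally have "mul w w = 0" using c B_e_e_nonzero by simp
  then have "\<forall>z\<in>L. mul z w = 0" using odd_right_mul_on_L[OF w(2)] w(1) \<open>w \<noteq> 0\<close> by blast
  then show False using e_L ew \<open>w \<noteq> 0\<close> by simp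
qed

lemma corner_scalar: "\<exists>c. mul (mul e a) e = sc c e"
proof -
  obtain c where "mul (mul e (proj False a)) e = sc c e"
    using even_corner_scalar[OF proj_Adeg] by blast
  moreover have "mul (mul e (proj True a)) e = 0" using odd_corner_zero[OF proj_Adeg] .
  ultimately have "mul (mul e a) e = sc c e"
    using mul_split_right[of e a] add_mul by simp
  then show ?thesis ..
qed

text \<open>With \<open>R = eA\<close> and \<open>L = Ae\<close>, a product \<open>y x\<close> lies in \<open>eAe = \<bbbK> e\<close> (\<open>mul_R_L\<close>);
  \<open>pairing y x\<close> is its coefficient.\<close>

definition R :: "'a set" where
  "R = {y. mul e y = y}"

definition pairing :: "'a \<Rightarrow> 'a \<Rightarrow> 'k" where
  "pairing y x = B (mul y x) e / B e e"

lemma mul_e_left: "y \<in> R \<Longrightarrow> mul e y = y"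
  unfolding R_def by blast

lemma e_mul_in_R: "mul e a \<in> R"
  unfolding R_def by (simp add: mul_assoc[symmetric] e_idem)

lemma subspace_R: "subspace R"
  unfolding R_def subspace_def by (simp add: mul_add mul_scale)

lemma mul_R_L:
  assumes "y \<in> R" "x \<in> L"
  shows "mul y x = sc (pairing y x) e"
proof -
  have "mul (mul e (mul y x)) e = mul (mul e y) (mul x e)" by (simp add: mul_assoc)
  then have "mul y x = mul (mul e (mul y x)) e"
    using mul_e_left[OF assms(1)] mul_e_right[OF assms(2)] by simp
  moreover obtain c where "mul (mul e (mul y x)) e = sc c e" using corner_scalar by blast
  ultimately have yx: "mul y x = sc c e" by simp
  then have "pairing y x = c" unfolding pairing_def using B_e_e_nonzero by (simp add: B_scale_left)
  then show ?thesis using yx by simp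
qed

lemma pairing_add_left: "pairing (y + y') x = pairing y x + pairing y' x"
  and pairing_scale_left: "pairing (sc c y) x = c * pairing y x"
  and pairing_add_right: "pairing y (x + x') = pairing y x + pairing y x'"
  and pairing_scale_right: "pairing y (sc c x) = c * pairing y x"
  unfolding pairing_def
  by (simp_all add: add_mul mul_add scale_mul mul_scale B_add_left B_scale_left add_divide_distrib)

lemma pairing_parity_mismatch:
  assumes "y \<in> R" "y \<in> Adeg p" "x \<in> L" "x \<in> Adeg q" "p \<noteq> q"
  shows "pairing y x = 0"
proof -
  have "sc (pairing y x) e \<in> Adeg True"
    using mul_R_L[OF assms(1,3)] mul_Adeg[OF assms(2,4)] assms(5) by simp
  moreover have "sc (pairing y x) e \<in> Adeg False" using Adeg_scale[OF e_even] .
  ultimately show ?thesis using Adeg_disjoint[of _ True] e_nonzero by fastforce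
qed

lemma pairing_proj:
  assumes "y \<in> R" "y \<in> Adeg p" "z \<in> L"
  shows "pairing y z = pairing y (proj p z)"
proof -
  have "pairing y (proj (\<not> p) z) = 0"
    using pairing_parity_mismatch[OF assms(1,2) L_proj[OF assms(3)] proj_Adeg] by simp
  then show ?thesis using proj_sum[of z] pairing_add_right[of y "proj False z" "proj True z"]
    by (cases p) simp_all
qed

lemma pairing_nondegenerate:
  assumes "x \<in> L" "x \<in> Adeg p" "x \<noteq> 0"
  shows "\<exists>y\<in>R \<inter> Adeg p. pairing y x \<noteq> 0"
proof -
  obtain a where a: "mul e (mul a x) \<noteq> 0" using exists_mul_mul_nonzero[OF e_nonzero assms(2,3)] by blast
  have deg: "mul e (proj q a) \<in> Adeg q" for q using mul_Adeg[OF e_even proj_Adeg] by simp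
  have "mul (mul e (proj (\<not> p) a)) x = 0"
    using mul_R_L[OF e_mul_in_R assms(1)] pairing_parity_mismatch[OF e_mul_in_R deg assms(1,2)] by simp
  moreover have "mul (mul e a) x = mul (mul e (proj p a)) x + mul (mul e (proj (\<not> p) a)) x"
    using mul_split_right[of e a] add_mul by (cases p) (simp_all add: add.commute)
  ultimately have "mul (mul e (proj p a)) x \<noteq> 0" using a by (simp add: mul_assoc)
  then have "pairing (mul e (proj p a)) x \<noteq> 0" using mul_R_L[OF e_mul_in_R assms(1)] by auto
  then show ?thesis using e_mul_in_R deg by blast
qed

lemma homogeneous_dual_basis:
  "\<exists>k xs ys. (\<forall>i<k. xs i \<in> L \<inter> Adeg p \<and> ys i \<in> R \<inter> Adeg p) \<and> biorthogonal pairing k xs ys \<and>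
     (\<forall>z\<in>L \<inter> Adeg p. (\<Sum>i<k. sc (pairing (ys i) z) (xs i)) = z)"
  by (rule exists_dual_basis[OF pairing_add_left pairing_scale_left pairing_add_right
        pairing_scale_right subspace_inter[OF subspace_L subspace_Adeg]
        subspace_inter[OF subspace_R subspace_Adeg]])
    (use pairing_nondegenerate in blast)

lemma pairing_diff_right: "pairing y (x - x') = pairing y x - pairing y x'"
  using pairing_add_right[of y "x - x'" x'] by simp

lemma pairing_sum_right: "pairing y (sum f I) = (\<Sum>i\<in>I. pairing y (f i))"
  by (rule pair_sum_right[OF pairing_add_left pairing_scale_left pairing_add_right pairing_scale_right])

lemma pairing_expansion:
  assumes "biorthogonal pairing k xs ys" "j < k"
  shows "pairing (ys j) (\<Sum>i<k. sc (c i) (xs i)) = c j"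
  by (rule pair_expansion[OF pairing_add_left pairing_scale_left pairing_add_right
        pairing_scale_right assms])

lemma exists_graded_dual_basis:
  "\<exists>r s xs ys. 1 \<le> r \<and>
     (\<forall>i<r + s. xs i \<in> L \<and> ys i \<in> R \<and> xs i \<in> Adeg (r \<le> i) \<and> ys i \<in> Adeg (r \<le> i)) \<and>
     biorthogonal pairing (r + s) xs ys \<and> (\<forall>z\<in>L. (\<Sum>i<r + s. sc (pairing (ys i) z) (xs i)) = z)"
proof -
  obtain r xs0 ys0 where
    mem0: "\<forall>i<r. xs0 i \<in> L \<inter> Adeg False \<and> ys0 i \<in> R \<inter> Adeg False" and
    bio0: "biorthogonal pairing r xs0 ys0" and
    exp0: "\<forall>z\<in>L \<inter> Adeg False. (\<Sum>i<r. sc (pairing (ys0 i) z) (xs0 i)) = z"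
    using homogeneous_dual_basis[of False] by blast
  obtain s xs1 ys1 where
    mem1: "\<forall>i<s. xs1 i \<in> L \<inter> Adeg True \<and> ys1 i \<in> R \<inter> Adeg True" and
    bio1: "biorthogonal pairing s xs1 ys1" and
    exp1: "\<forall>z\<in>L \<inter> Adeg True. (\<Sum>i<s. sc (pairing (ys1 i) z) (xs1 i)) = z"
    using homogeneous_dual_basis[of True] by blast
  define xs where "xs i = (if i < r then xs0 i else xs1 (i - r))" for i
  define ys where "ys i = (if i < r then ys0 i else ys1 (i - r))" for i
  have mem: "\<forall>i<r + s. xs i \<in> L \<and> ys i \<in> R \<and> xs i \<in> Adeg (r \<le> i) \<and> ys i \<in> Adeg (r \<le> i)"
    using mem0 mem1 unfolding xs_def ys_def by (auto simp: not_less)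
  have "pairing (ys i) (xs j) = (if i = j then 1 else 0)" if "i < r + s" "j < r + s" for i j
  proof (cases "(i < r) = (j < r)")
    case True
    then show ?thesis using bio0 bio1 that unfolding biorthogonal_def xs_def ys_def by auto
  next
    case False
    then have "pairing (ys i) (xs j) = 0"
      using pairing_parity_mismatch mem that by (metis not_le)
    then show ?thesis using False by auto
  qed
  then have bio: "biorthogonal pairing (r + s) xs ys" unfolding biorthogonal_def by blast
  have expansion: "(\<Sum>i<r + s. sc (pairing (ys i) z) (xs i)) = z" if z: "z \<in> L" for z
  proof -
    have "(\<Sum>i<r. sc (pairing (ys0 i) z) (xs0 i)) = (\<Sum>i<r. sc (pairing (ys0 i) (proj False z)) (xs0 i))"
      using pairing_proj mem0 z by (intro sum.cong) auto
    also have "\<dots> = proj False z" using exp0 L_proj[OF z] proj_Adeg by blast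
    finally have even_part: "(\<Sum>i<r. sc (pairing (ys0 i) z) (xs0 i)) = proj False z" .
    have "(\<Sum>i<s. sc (pairing (ys1 i) z) (xs1 i)) = (\<Sum>i<s. sc (pairing (ys1 i) (proj True z)) (xs1 i))"
      using pairing_proj mem1 z by (intro sum.cong) auto
    also have "\<dots> = proj True z" using exp1 L_proj[OF z] proj_Adeg by blast
    finally have odd_part: "(\<Sum>i<s. sc (pairing (ys1 i) z) (xs1 i)) = proj True z" .
    show ?thesis
      unfolding sum_lessThan_add_split xs_def ys_def using even_part odd_part proj_sum[of z] by simp
  qed
  have "r \<noteq> 0"
  proof
    assume "r = 0"
    then show False using exp0 e_L e_even e_nonzero by auto
  qed
  then show ?thesis using mem bio expansion by (intro exI conjI) auto
qed

lemma L_annihilator_trivial: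
  assumes "\<And>z. z \<in> L \<Longrightarrow> mul d z = 0"
  shows "d = 0"
  using exists_mul_mul_nonzero[OF _ e_even e_nonzero] assms L_mul[OF e_L] by blast

text \<open>\<open>coord n xs ys a\<close> is the matrix of left multiplication by \<open>a\<close> on \<open>L\<close> in the basis \<open>xs\<close>.\<close>

definition coord :: "nat \<Rightarrow> (nat \<Rightarrow> 'a) \<Rightarrow> (nat \<Rightarrow> 'a) \<Rightarrow> 'a \<Rightarrow> nat \<Rightarrow> nat \<Rightarrow> 'k" where
  "coord n xs ys a = (\<lambda>i j. if i < n \<and> j < n then pairing (ys i) (mul a (xs j)) else 0)"

definition uncoord :: "nat \<Rightarrow> (nat \<Rightarrow> 'a) \<Rightarrow> (nat \<Rightarrow> 'a) \<Rightarrow> (nat \<Rightarrow> nat \<Rightarrow> 'k) \<Rightarrow> 'a" where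
  "uncoord n xs ys X = (\<Sum>i<n. \<Sum>j<n. sc (X i j) (mul (xs i) (ys j)))"

context
  fixes r s :: nat and xs ys :: "nat \<Rightarrow> 'a"
  assumes dual_mem: "\<And>i. i < r + s \<Longrightarrow> xs i \<in> L \<and> ys i \<in> R \<and> xs i \<in> Adeg (r \<le> i) \<and> ys i \<in> Adeg (r \<le> i)"
    and dual_bio: "biorthogonal pairing (r + s) xs ys"
    and dual_expansion: "\<And>z. z \<in> L \<Longrightarrow> (\<Sum>i<r + s. sc (pairing (ys i) z) (xs i)) = z"
begin

lemma coord_carrier: "coord (r + s) xs ys a \<in> mat_carrier (r + s)"
  unfolding coord_def mat_carrier_def by auto

lemma coord_add: "coord (r + s) xs ys (a + b) = mat_add (coord (r + s) xs ys a) (coord (r + s) xs ys b)"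
  unfolding coord_def mat_add_def by (intro ext) (simp add: add_mul pairing_add_right)

lemma coord_scale: "coord (r + s) xs ys (sc c a) = mat_smult c (coord (r + s) xs ys a)"
  unfolding coord_def mat_smult_def by (intro ext) (simp add: scale_mul pairing_scale_right)

lemma coord_mul:
  "coord (r + s) xs ys (mul a b) = mat_mult (r + s) (coord (r + s) xs ys a) (coord (r + s) xs ys b)"
proof (intro ext)
  fix i j
  show "coord (r + s) xs ys (mul a b) i j = mat_mult (r + s) (coord (r + s) xs ys a) (coord (r + s) xs ys b) i j"
  proof (cases "i < r + s \<and> j < r + s")
    case True
    then have "mul b (xs j) \<in> L" using dual_mem L_mul by blast
    then have "mul (mul a b) (xs j) = mul a (\<Sum>l<r + s. sc (pairing (ys l) (mul b (xs j))) (xs l))"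
      using dual_expansion[of "mul b (xs j)"] by (simp add: mul_assoc)
    also have "\<dots> = (\<Sum>l<r + s. sc (pairing (ys l) (mul b (xs j))) (mul a (xs l)))"
      by (simp add: mul_sum mul_scale)
    finally have "mul (mul a b) (xs j) = \<dots>" .
    then show ?thesis
      using True unfolding coord_def mat_mult_def
      by (simp add: pairing_sum_right pairing_scale_right mult.commute)
  qed (auto simp: coord_def mat_mult_def)
qed

lemma inj_coord: "inj (coord (r + s) xs ys)"
proof (rule injI)
  fix a b assume eq: "coord (r + s) xs ys a = coord (r + s) xs ys b"
  have "mul (a - b) (xs j) = 0" if j: "j < r + s" for j
  proof -
    have coeff: "pairing (ys i) (mul (a - b) (xs j)) = 0" if "i < r + s" for i
      using fun_cong[OF fun_cong[OF eq, of i], of j] that j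
      by (simp add: coord_def diff_mul pairing_diff_right)
    have "mul (a - b) (xs j) \<in> L" using dual_mem[OF j] L_mul by blast
    then have "mul (a - b) (xs j) = (\<Sum>i<r + s. sc (pairing (ys i) (mul (a - b) (xs j))) (xs i))"
      using dual_expansion by simp
    also have "\<dots> = 0" using coeff by simp
    finally show ?thesis .
  qed
  then have "mul (a - b) z = 0" if "z \<in> L" for z
  proof -
    have "mul (a - b) z = mul (a - b) (\<Sum>i<r + s. sc (pairing (ys i) z) (xs i))"
      using dual_expansion[OF that] by simp
    also have "\<dots> = (\<Sum>i<r + s. sc (pairing (ys i) z) (mul (a - b) (xs i)))"
      by (simp add: mul_sum mul_scale)
    finally show ?thesis using \<open>\<And>j. j < r + s \<Longrightarrow> mul (a - b) (xs j) = 0\<close> by simp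
  qed
  then show "a = b" using L_annihilator_trivial[of "a - b"] by simp
qed

lemma mul_basis_product:
  assumes "i < r + s" "j < r + s" "l < r + s"
  shows "mul (mul (xs i) (ys j)) (xs l) = (if j = l then xs i else 0)"
proof -
  have "mul (mul (xs i) (ys j)) (xs l) = mul (xs i) (sc (pairing (ys j) (xs l)) e)"
    using mul_R_L dual_mem assms by (simp add: mul_assoc)
  also have "\<dots> = sc (pairing (ys j) (xs l)) (xs i)" using mul_e_right dual_mem assms by (simp add: mul_scale)
  finally show ?thesis using dual_bio assms unfolding biorthogonal_def by simp
qed

lemma coord_uncoord:
  assumes "X \<in> mat_carrier (r + s)"
  shows "coord (r + s) xs ys (uncoord (r + s) xs ys X) = X"
proof (intro ext)
  fix i j
  show "coord (r + s) xs ys (uncoord (r + s) xs ys X) i j = X i j"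
  proof (cases "i < r + s \<and> j < r + s")
    case True
    have "mul (uncoord (r + s) xs ys X) (xs j) = (\<Sum>l<r + s. \<Sum>m<r + s. if m = j then sc (X l j) (xs l) else 0)"
      unfolding uncoord_def using True
      by (simp add: sum_mul scale_mul mul_basis_product if_distrib[of "sc _"] cong: if_cong)
    also have "\<dots> = (\<Sum>l<r + s. sc (X l j) (xs l))" using True by simp
    finally show ?thesis using pairing_expansion[OF dual_bio] True by (simp add: coord_def)
  qed (use assms in \<open>auto simp: coord_def mat_carrier_def\<close>)
qed

lemma coord_parity:
  assumes "a \<in> Adeg b" "((i < r) \<noteq> (j < r)) \<noteq> b"
  shows "coord (r + s) xs ys a i j = 0"
proof (cases "i < r + s \<and> j < r + s")
  case True
  then have "mul a (xs j) \<in> L" "mul a (xs j) \<in> Adeg (b \<noteq> (r \<le> j))"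
    using dual_mem L_mul mul_Adeg[OF assms(1)] by blast+
  moreover have "ys i \<in> R" "ys i \<in> Adeg (r \<le> i)" using dual_mem True by blast+
  moreover have "(r \<le> i) \<noteq> (b \<noteq> (r \<le> j))" using assms(2) by auto
  ultimately have "pairing (ys i) (mul a (xs j)) = 0" using pairing_parity_mismatch by blast
  then show ?thesis by (simp add: coord_def)
qed (auto simp: coord_def)

lemma uncoord_parity:
  assumes "\<And>i j. X i j \<noteq> 0 \<Longrightarrow> ((i < r) \<noteq> (j < r)) = b"
  shows "uncoord (r + s) xs ys X \<in> Adeg b"
  unfolding uncoord_def
proof (intro Adeg_sum)
  fix i j assume "i \<in> {..<r + s}" "j \<in> {..<r + s}"
  then have "mul (xs i) (ys j) \<in> Adeg ((r \<le> i) \<noteq> (r \<le> j))"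
    using mul_Adeg dual_mem by simp
  then have "mul (xs i) (ys j) \<in> Adeg ((i < r) \<noteq> (j < r))"
    by (simp add: not_le[symmetric])
  then show "sc (X i j) (mul (xs i) (ys j)) \<in> Adeg b"
    using assms[of i j] by (cases "X i j = 0") (simp_all add: Adeg_scale)
qed

lemma coord_image_Adeg: "coord (r + s) xs ys ` Adeg b = mat_Adeg r s b"
proof (intro equalityI subsetI)
  fix X :: "nat \<Rightarrow> nat \<Rightarrow> 'k" assume "X \<in> coord (r + s) xs ys ` Adeg b"
  then show "X \<in> mat_Adeg r s b" unfolding mat_Adeg_iff using coord_carrier coord_parity by blast
next
  fix X :: "nat \<Rightarrow> nat \<Rightarrow> 'k" assume "X \<in> mat_Adeg r s b"
  then have "X \<in> mat_carrier (r + s)" "\<And>i j. X i j \<noteq> 0 \<Longrightarrow> ((i < r) \<noteq> (j < r)) = b"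
    unfolding mat_Adeg_iff by blast+
  then have "uncoord (r + s) xs ys X \<in> Adeg b" "X = coord (r + s) xs ys (uncoord (r + s) xs ys X)"
    using uncoord_parity coord_uncoord by simp_all
  then show "X \<in> coord (r + s) xs ys ` Adeg b" by (rule rev_image_eqI)
qed

lemma iso_Mrs_of_dual_basis: "iso_Mrs sc mul A0 A1 r s"
proof -
  have "mat_carrier (r + s) \<subseteq> range (coord (r + s) xs ys)"
  proof
    fix X :: "nat \<Rightarrow> nat \<Rightarrow> 'k" assume "X \<in> mat_carrier (r + s)"
    then have "X = coord (r + s) xs ys (uncoord (r + s) xs ys X)" by (simp add: coord_uncoord)
    then show "X \<in> range (coord (r + s) xs ys)" by (rule range_eqI)
  qed
  then have "range (coord (r + s) xs ys) = mat_carrier (r + s)" using coord_carrier by blast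
  then have "bij_betw (coord (r + s) xs ys) UNIV (mat_carrier (r + s))"
    unfolding bij_betw_def using inj_coord by blast
  then show ?thesis
    unfolding iso_Mrs_def using coord_add coord_scale coord_mul coord_image_Adeg[of False] coord_image_Adeg[of True]
    by (intro exI[of _ "coord (r + s) xs ys"]) (simp add: Adeg_False Adeg_True mat_Adeg_def)
qed

end

lemma exists_iso_Mrs: "\<exists>r s. 1 \<le> r \<and> iso_Mrs sc mul A0 A1 r s"
proof -
  obtain r s xs ys where "1 \<le> r"
    and "\<forall>i<r + s. xs i \<in> L \<and> ys i \<in> R \<and> xs i \<in> Adeg (r \<le> i) \<and> ys i \<in> Adeg (r \<le> i)"
    and "biorthogonal pairing (r + s) xs ys" and "\<forall>z\<in>L. (\<Sum>i<r + s. sc (pairing (ys i) z) (xs i)) = z"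
    using exists_graded_dual_basis by blast
  then have "iso_Mrs sc mul A0 A1 r s" by (intro iso_Mrs_of_dual_basis[of r s xs ys]) auto
  then show ?thesis using \<open>1 \<le> r\<close> by blast
qed

end

lemma iso_MrsE:
  fixes sc :: "'k::field \<Rightarrow> 'a::ab_group_add \<Rightarrow> 'a"
  assumes "iso_Mrs sc mul A0 A1 r s"
  obtains f :: "'a \<Rightarrow> nat \<Rightarrow> nat \<Rightarrow> 'k"
  where "bij_betw f UNIV (mat_carrier (r + s))"
    and "\<And>x y. f (x + y) = mat_add (f x) (f y)" and "\<And>c x. f (sc c x) = mat_smult c (f x)"
    and "\<And>x y. f (mul x y) = mat_mult (r + s) (f x) (f y)"
    and "f ` A0 = mat_even r s" and "f ` A1 = mat_odd r s"
  using assms unfolding iso_Mrs_def by (elim exE conjE) (simp add: that)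

lemma supertrace_form_pullback_nondegenerate:
  fixes f :: "'a::ab_group_add \<Rightarrow> nat \<Rightarrow> nat \<Rightarrow> 'k::field"
  assumes bij: "bij_betw f UNIV (mat_carrier (r + s))"
    and f_add: "\<And>x y. f (x + y) = mat_add (f x) (f y)"
    and orthogonal: "\<And>y. supertrace_form r s (f x) (f y) = 0"
  shows "x = 0"
proof -
  have "f x \<in> mat_carrier (r + s)" using bij by (auto simp: bij_betw_def)
  moreover have "supertrace_form r s (f x) Y = 0" if "Y \<in> mat_carrier (r + s)" for Y
  proof -
    have "Y \<in> range f" using bij that by (simp add: bij_betw_def)
    then show ?thesis using orthogonal by blast
  qed
  ultimately have "f x = (\<lambda>_ _. 0)" by (rule supertrace_form_nondegenerate)
  moreover have "f 0 = (\<lambda>_ _. 0)"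
  proof (intro ext)
    fix i j
    show "f 0 i j = 0"
      using fun_cong[OF fun_cong[OF f_add[of 0 0], of i], of j]
      unfolding mat_add_def add_0_left by (metis add_cancel_right_right)
  qed
  ultimately show "x = 0" using bij unfolding bij_betw_def by (metis injD)
qed

context assoc_superalgebra
begin

lemma iso_Mrs_admits_ess:
  assumes "iso_Mrs sc mul A0 A1 r s"
  shows "admits_ess sc mul A0 A1"
proof -
  obtain f :: "'a \<Rightarrow> nat \<Rightarrow> nat \<Rightarrow> 'k" where bij: "bij_betw f UNIV (mat_carrier (r + s))"
    and f_add: "\<And>x y. f (x + y) = mat_add (f x) (f y)" and f_scale: "\<And>c x. f (sc c x) = mat_smult c (f x)"
    and f_mul: "\<And>x y. f (mul x y) = mat_mult (r + s) (f x) (f y)"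
    and f_even: "f ` A0 = mat_even r s" and f_odd: "f ` A1 = mat_odd r s"
    by (rule iso_MrsE[OF assms]) blast
  define B where "B x y = supertrace_form r s (f x) (f y)" for x y
  have even: "f x \<in> mat_even r s" if "x \<in> A0" for x using f_even that by blast
  have odd: "f x \<in> mat_odd r s" if "x \<in> A1" for x using f_odd that by blast
  have "even_symmetric_structure sc mul A0 A1 B"
    unfolding even_symmetric_structure_def
  proof (intro conjI allI ballI impI)
    show "B (x + y) z = B x z + B y z" "B z (x + y) = B z x + B z y"
      "B (sc c x) z = c * B x z" "B z (sc c x) = c * B z x" for x y z c
      by (simp_all add: B_def f_add f_scale supertrace_form_add_left supertrace_form_add_right
          supertrace_form_smult_left supertrace_form_smult_right)
    show "B (mul x y) z = B x (mul y z)" for x y z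
      by (simp add: B_def f_mul supertrace_form_assoc)
    show "B x y = 0" "B y x = 0" if "x \<in> A0" "y \<in> A1" for x y
      unfolding B_def using supertrace_form_even_odd[OF even odd] that by blast+
    show "B x y = B y x" if "x \<in> A0" for x y
      unfolding B_def using supertrace_form_even_sym[OF even] that by blast
    show "B x y = - B y x" if "x \<in> A1" for x y
      unfolding B_def using supertrace_form_odd_antisym[OF odd] that by blast
  qed (use supertrace_form_pullback_nondegenerate[OF bij f_add] in \<open>auto simp: B_def\<close>)
  then show ?thesis unfolding admits_ess_def by blast
qed

end

lemma iso_Mrs_supercommutative:
  fixes sc :: "'k::field \<Rightarrow> 'a::ab_group_add \<Rightarrow> 'a"
  assumes iso: "iso_Mrs sc mul A0 A1 r s" and "1 \<le> r" and scomm: "supercommutative mul A0 A1"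
  shows "r = 1 \<and> s = 0"
proof (rule ccontr)
  assume "\<not> (r = 1 \<and> s = 0)"
  then have n: "0 < r + s" "1 < r + s" using assms(2) by auto
  obtain f :: "'a \<Rightarrow> nat \<Rightarrow> nat \<Rightarrow> 'k" where
    "bij_betw f UNIV (mat_carrier (r + s))"
    "\<And>x y. f (x + y) = mat_add (f x) (f y)" "\<And>c x. f (sc c x) = mat_smult c (f x)"
    and f_mul: "\<And>x y. f (mul x y) = mat_mult (r + s) (f x) (f y)"
    and "f ` A0 = mat_even r s" "f ` A1 = mat_odd r s"
    by (rule iso_MrsE[OF iso]) blast
  then have f_Adeg: "f ` (if b then A1 else A0) = mat_Adeg r s b" for b
    by (simp add: mat_Adeg_def)
  have "mat_unit 0 0 \<in> f ` A0" using mat_unit_Adeg[OF n(1) n(1)] f_Adeg[of False] by simp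
  then obtain x where x: "x \<in> A0" "mat_unit 0 0 = f x" by blast
  have "mat_unit 0 1 \<in> f ` (if (0 < r) \<noteq> (1 < r) then A1 else A0)"
    using mat_unit_Adeg[OF n(1) n(2)] f_Adeg by simp
  then obtain y where y: "y \<in> A0 \<union> A1" "mat_unit 0 1 = f y" by (auto split: if_splits)
  have "mul x y = mul y x" using scomm x(1) y(1) unfolding supercommutative_def by blast
  then have "mat_mult (r + s) (f x) (f y) = mat_mult (r + s) (f y) (f x)"
    using f_mul[of x y] f_mul[of y x] by simp
  then have "(mat_unit 0 1 :: nat \<Rightarrow> nat \<Rightarrow> 'k) = (\<lambda>_ _. 0)"
    unfolding x(2)[symmetric] y(2)[symmetric] using n by (simp add: mat_mult_unit)
  then have "(mat_unit 0 1 0 1 :: 'k) = 0" by simp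
  then show False by (simp add: mat_unit_def)
qed

theorem mainTheorem4:
  fixes sc :: "'k::field_char_0 \<Rightarrow> 'a::ab_group_add \<Rightarrow> 'a"
    and mul :: "'a \<Rightarrow> 'a \<Rightarrow> 'a"
    and A0 A1 :: "'a set"
  assumes "alg_closed TYPE('k)"
    and "superalgebra sc mul A0 A1"
    and "associative_mul mul"
    and "fin_dim sc"
    and "simple_superalgebra sc mul A0 A1"
  shows "(admits_ess sc mul A0 A1 \<longleftrightarrow> (\<exists>r s. r \<ge> 1 \<and> iso_Mrs sc mul A0 A1 r s))
       \<and> (supercommutative mul A0 A1 \<longrightarrow> (admits_ess sc mul A0 A1 \<longleftrightarrow> iso_Mrs sc mul A0 A1 1 0))"
proof -
  interpret assoc_superalgebra sc mul A0 A1
    using assms(2,3) by unfold_locales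
  have classification: "admits_ess sc mul A0 A1 \<longleftrightarrow> (\<exists>r s. r \<ge> 1 \<and> iso_Mrs sc mul A0 A1 r s)"
  proof
    assume "admits_ess sc mul A0 A1"
    then obtain B where "even_symmetric_structure sc mul A0 A1 B" unfolding admits_ess_def by blast
    then interpret ess_superalgebra sc mul A0 A1 B
      using assms by unfold_locales
    show "\<exists>r s. r \<ge> 1 \<and> iso_Mrs sc mul A0 A1 r s" by (rule exists_iso_Mrs)
  qed (use iso_Mrs_admits_ess in blast)
  then show ?thesis
    using iso_Mrs_supercommutative iso_Mrs_admits_ess by (metis order_refl)
qed

end
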